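(* Let $k<n$ be coprime positive integers, $b=k/n$, and let $F\in\mathfrak{F}$ (with this $b$ and $n$). Then $F$ has an attracting periodic orbit of period $n$ all of whose points lie in the first lap $(-\infty,y_-)$ or the third lap $(y_+,\infty)$ of $F$. Moreover, both critical points $y_-$ and $y_+$ of $F$ lie in the immediate basin of attraction of this periodic orbit.
   Context: Fix coprime positive integers $k<n$ and set $b=k/n\in(0,1)$. Let $g\colon\mathbb{R}\to(0,1)$ be a $C^3$ map and $F\colon\mathbb{R}\to\mathbb{R}$, $F(x)=x+b-g(x)$. The class $\mathfrak{F}$ consists of all such $F$ for which the Schwarzian derivative $SF=\frac{F'''}{F'}-\frac32\left(\frac{F''}{F'}\right)^2$ is negative (wherever defined) and the following hold: (A) there exist $y_-,y_+$ with $b-1<y_-<0<y_+<b$ such that $0<g'(x)<1$ on $(-\infty,y_-)\cup(y_+,\infty)$, $g'(y_-)=g'(y_+)=1$, and $g'(x)>1$ on $(y_-,y_+)$; (B) $g(b-1)<b<g(b)$; (C) there exists $\varepsilon>0$ such that (C1) $g(x)<\varepsilon$ for all $x<-\frac1{2n}$; (C2) $g(x)>1-\varepsilon$ for all $x>\frac1{2n}$; (C3) $(n-1)\varepsilon<1-g(y_+)$ and $(n-1)\varepsilon<\frac1{2n}-\big(1-g(y_+)+y_+\big)$; (C4) $(n-1)\varepsilon<g(y_-)$ and $(n-1)\varepsilon<\frac1{2n}-\big(g(y_-)-y_-\big)$. Thus $F$ is increasing on $(-\infty,y_-]$ (the first lap) and on $[y_+,\infty)$ (the third lap), decreasing on $[y_-,y_+]$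 (the second lap), and $y_\pm$ are its critical points. The immediate basin of attraction of an attracting periodic orbit is the union of the connected components of its basin of attraction that contain points of the orbit. *)

theory Defs
  imports "HOL-Analysis.Analysis"
begin

definition C3 :: "(real \<Rightarrow> real) \<Rightarrow> bool" where
  "C3 f \<longleftrightarrow>
     (\<forall>x. (f has_real_derivative deriv f x) (at x)) \<and>
     (\<forall>x. (deriv f has_real_derivative deriv (deriv f) x) (at x)) \<and>
     (\<forall>x. (deriv (deriv f) has_real_derivative deriv (deriv (deriv f)) x) (at x)) \<and>
     continuous_on UNIV (deriv (deriv (deriv f)))"

definition schwarzian :: "(real \<Rightarrow> real) \<Rightarrow> real \<Rightarrow> real" where
  "schwarzian F x =
     deriv (deriv (deriv F)) x / deriv F x - 3 / 2 * (deriv (deriv F) x / deriv F x) ^ 2"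

definition orbit_pts :: "(real \<Rightarrow> real) \<Rightarrow> nat \<Rightarrow> real \<Rightarrow> real set" where
  "orbit_pts F m p = {(F ^^ j) p | j. j < m}"

definition periodic_pt :: "(real \<Rightarrow> real) \<Rightarrow> nat \<Rightarrow> real \<Rightarrow> bool" where
  "periodic_pt F m p \<longleftrightarrow> 0 < m \<and> (F ^^ m) p = p \<and> (\<forall>j. 0 < j \<and> j < m \<longrightarrow> (F ^^ j) p \<noteq> p)"

definition attracting_periodic_pt :: "(real \<Rightarrow> real) \<Rightarrow> nat \<Rightarrow> real \<Rightarrow> bool" where
  "attracting_periodic_pt F m p \<longleftrightarrow>
     periodic_pt F m p \<and> (F ^^ m) differentiable (at p) \<and> \<bar>deriv (F ^^ m) p\<bar> < 1"

definition basin :: "(real \<Rightarrow> real) \<Rightarrow> real set \<Rightarrow> real set" where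
  "basin F Orb = {x. ((\<lambda>j. infdist ((F ^^ j) x) Orb) \<longlongrightarrow> 0) sequentially}"

definition immediate_basin :: "(real \<Rightarrow> real) \<Rightarrow> real set \<Rightarrow> real set" where
  "immediate_basin F Orb = (\<Union>q\<in>Orb. connected_component_set (basin F Orb) q)"

end

theory Submission
  imports Defs
begin

text \<open>
  Off the window \<open>(-1/(2n), 1/(2n))\<close> the function g is \<open>\<epsilon>\<close>-close to 0 on the left and to 1 on
  the right, so F shadows the rotation \<open>l \<mapsto> l + k - n\<cdot>[l > 0]\<close> of the lattice \<open>(1/n)\<int>\<close>;
  by (C3) and (C4) the orbits of both critical points do so for n steps without entering the
  window. Let \<open>m k \<equiv> 1 (mod n)\<close>. Then \<open>F^m\<close> maps \<open>J_- = [F^(n-m) y_+, y_-]\<close> into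
  \<open>J_+ = [y_+, F^m y_-]\<close> and \<open>F^(n-m)\<close> maps \<open>J_+\<close> back into \<open>J_-\<close>, every intermediate image
  lying in an outer lap, where \<open>0 < F' < 1\<close>. So \<open>F^n\<close> is an increasing strict contraction of
  \<open>J_-\<close> into itself. Its fixed point p attracts \<open>J_-\<close>, its multiplier lies in (0, 1), and the
  connected sets \<open>J_-\<close> and \<open>J_+\<close>, which contain the critical points, lie in the basin of the
  orbit of p.
\<close>

section \<open>Increasing strict contractions\<close>

definition mono_contractive_on :: "real set \<Rightarrow> (real \<Rightarrow> real) \<Rightarrow> bool" where
  "mono_contractive_on S f \<longleftrightarrow> (\<forall>u\<in>S. \<forall>v\<in>S. u < v \<longrightarrow> f u < f v \<and> f v - f u < v - u)"

lemma mono_contractive_onD: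
  "mono_contractive_on S f \<Longrightarrow> u \<in> S \<Longrightarrow> v \<in> S \<Longrightarrow> u < v \<Longrightarrow> f u < f v \<and> f v - f u < v - u"
  unfolding mono_contractive_on_def by blast

lemma mono_contractive_on_comp:
  assumes "mono_contractive_on S f" "f ` S \<subseteq> T" "mono_contractive_on T h"
  shows "mono_contractive_on S (h \<circ> f)"
  unfolding mono_contractive_on_def
proof (intro ballI impI)
  fix u v assume uv: "u \<in> S" "v \<in> S" "u < v"
  have "f u < f v \<and> f v - f u < v - u" using mono_contractive_onD[OF assms(1) uv] .
  moreover have "f u \<in> T" "f v \<in> T" using assms(2) uv by auto
  ultimately show "(h \<circ> f) u < (h \<circ> f) v \<and> (h \<circ> f) v - (h \<circ> f) u < v - u"
    using mono_contractive_onD[OF assms(3), of "f u" "f v"] by auto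
qed

lemma mono_contractive_on_image_interval:
  assumes "mono_contractive_on {a..b} f"
  shows "f ` {a..b} \<subseteq> {f a..f b}"
proof
  fix y assume "y \<in> f ` {a..b}"
  then obtain x where x: "a \<le> x" "x \<le> b" and y: "y = f x" by auto
  have "f a \<le> f x" using mono_contractive_onD[OF assms, of a x] x by (cases "a = x") auto
  moreover have "f x \<le> f b" using mono_contractive_onD[OF assms, of x b] x by (cases "x = b") auto
  ultimately show "y \<in> {f a..f b}" using y by simp
qed

lemma mono_contractive_on_lipschitz:
  assumes "mono_contractive_on S f"
  shows "1-lipschitz_on S f"
proof (rule lipschitz_onI)
  fix u v assume "u \<in> S" "v \<in> S"
  then show "dist (f u) (f v) \<le> 1 * dist u v"
    using mono_contractive_onD[OF assms, of u v] mono_contractive_onD[OF assms, of v u]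
    by (cases u v rule: linorder_cases) (auto simp: dist_real_def)
qed simp

lemma mono_contractive_on_continuous_on: "mono_contractive_on S f \<Longrightarrow> continuous_on S f"
  by (rule lipschitz_on_continuous_on[OF mono_contractive_on_lipschitz])

lemma mono_contractive_on_if_deriv:
  assumes deriv: "\<And>x. (f has_real_derivative f' x) (at x)"
    and slope: "\<And>x. a < x \<Longrightarrow> x < b \<Longrightarrow> 0 < f' x \<and> f' x < 1"
  shows "mono_contractive_on {a..b} f"
  unfolding mono_contractive_on_def
proof (intro ballI impI)
  fix u v assume uv: "u \<in> {a..b}" "v \<in> {a..b}" "u < v"
  obtain z where z: "u < z" "z < v" and mvt: "f v - f u = (v - u) * f' z"
    using MVT2[OF \<open>u < v\<close> deriv] by blast
  have "0 < f' z" "f' z < 1" using slope[of z] uv z by auto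
  then have "0 < (v - u) * f' z" "(v - u) * f' z < v - u"
    using \<open>u < v\<close> by (simp_all add: mult_less_cancel_left1)
  then show "f u < f v \<and> f v - f u < v - u" using mvt by simp
qed

lemma mono_contractive_self_map_fixpoint:
  assumes h: "mono_contractive_on {a..b} h" "h ` {a..b} \<subseteq> {a..b}" and "a \<le> b"
  obtains p where "p \<in> {a..b}" "h p = p"
proof -
  have "continuous_on {a..b} (\<lambda>x. h x - x)"
    by (intro continuous_intros mono_contractive_on_continuous_on h(1))
  moreover have "h b - b \<le> 0" "0 \<le> h a - a"
    using h(2) \<open>a \<le> b\<close> by (auto simp: image_subset_iff)
  ultimately obtain p where "a \<le> p" "p \<le> b" "h p - p = 0"
    using IVT2'[of "\<lambda>x. h x - x" b 0 a] \<open>a \<le> b\<close> by auto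
  then show ?thesis using that by simp
qed

lemma mono_contractive_fixpoint_unique:
  "mono_contractive_on S h \<Longrightarrow> p \<in> S \<Longrightarrow> q \<in> S \<Longrightarrow> h p = p \<Longrightarrow> h q = q \<Longrightarrow> p = q"
  using mono_contractive_onD[of S h p q] mono_contractive_onD[of S h q p]
  by (cases p q rule: linorder_cases) auto

lemma mono_contractive_iterates_tendsto_fixpoint:
  assumes h: "mono_contractive_on {a..b} h" "h ` {a..b} \<subseteq> {a..b}"
    and p: "p \<in> {a..b}" "h p = p" and x: "x \<in> {a..b}"
  shows "(\<lambda>i. (h ^^ i) x) \<longlonglongrightarrow> p"
proof -
  define u where "u i = (h ^^ i) x" for i
  have u_Suc: "u (Suc i) = h (u i)" for i by (simp add: u_def)
  have u_in: "u i \<in> {a..b}" for i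
    by (induction i) (use x h(2) in \<open>auto simp: u_def image_subset_iff\<close>)
  have below: "y \<le> h y \<and> h y \<le> p" if "y \<in> {a..b}" "y \<le> p" for y
    using mono_contractive_onD[OF h(1) that(1) p(1)] that p(2) by (cases "y = p") auto
  have above: "h y \<le> y \<and> p \<le> h y" if "y \<in> {a..b}" "p \<le> y" for y
    using mono_contractive_onD[OF h(1) p(1) that(1)] that p(2) by (cases "y = p") auto
  have "monoseq u"
  proof (cases "x \<le> p")
    case True
    then have "u i \<le> p" for i by (induction i) (use u_in below u_Suc in \<open>auto simp: u_def\<close>)
    then have "incseq u" using below u_in u_Suc by (intro incseq_SucI) simp
    then show ?thesis by (simp add: monoseq_iff)
  next
    case False
    then have "p \<le> u i" for i by (induction i) (use u_in above u_Suc in \<open>auto simp: u_def\<close>)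
    then have "decseq u" using above u_in u_Suc by (intro decseq_SucI) simp
    then show ?thesis by (simp add: monoseq_iff)
  qed
  moreover have "Bseq u"
    unfolding Bseq_eq_bounded using u_in
    by (intro bounded_subset[OF bounded_closed_interval[of a b]]) auto
  ultimately obtain l where l: "u \<longlonglongrightarrow> l"
    using Bseq_monoseq_convergent convergent_def by blast
  have l_in: "l \<in> {a..b}"
    using u_in by (auto intro: LIMSEQ_le_const[OF l] LIMSEQ_le_const2[OF l])
  have "(\<lambda>i. h (u i)) \<longlonglongrightarrow> h l"
    using u_in
    by (intro continuous_on_tendsto_compose[OF mono_contractive_on_continuous_on[OF h(1)] l l_in])
      simp
  moreover have "(\<lambda>i. h (u i)) \<longlonglongrightarrow> l" using LIMSEQ_Suc[OF l] by (simp add: u_Suc)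
  ultimately have "h l = l" by (rule LIMSEQ_unique)
  then have "l = p" using mono_contractive_fixpoint_unique[OF h(1) l_in p(1)] p(2) by simp
  then show ?thesis using l unfolding u_def by simp
qed

section \<open>Iterates, periodic orbits and basins\<close>

lemma funpow_has_real_derivative:
  assumes "\<And>x. (f has_real_derivative f' x) (at x)"
  shows "((f ^^ j) has_real_derivative (\<Prod>i<j. f' ((f ^^ i) x))) (at x)"
proof (induction j)
  case 0 then show ?case by simp
next
  case (Suc j)
  have "((\<lambda>x. f ((f ^^ j) x)) has_real_derivative f' ((f ^^ j) x) * (\<Prod>i<j. f' ((f ^^ i) x))) (at x)"
    by (rule DERIV_chain2[OF assms Suc])
  then show ?case by (simp add: mult.commute)
qed

lemma isCont_funpow:
  fixes f :: "'a::t2_space \<Rightarrow> 'a" and j :: nat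
  assumes "\<And>x. isCont f x"
  shows "isCont (f ^^ j) x"
proof (induction j arbitrary: x)
  case (Suc j)
  then show ?case using isCont_o2[OF Suc.IH assms] by simp
qed simp

lemma funpow_div_mod: "(f ^^ j) x = (f ^^ (j mod n)) ((f ^^ (n * (j div n))) x)"
  by (metis comp_apply funpow_add mod_mult_div_eq)

lemma funpow_periodic_in_orbit_pts:
  assumes "0 < n" "(f ^^ n) p = p"
  shows "(f ^^ j) p \<in> orbit_pts f n p"
proof -
  have "(f ^^ (n * q)) p = p" for q
    using assms(2) by (induction q) (simp_all add: funpow_add)
  then have "(f ^^ j) p = (f ^^ (j mod n)) p" using funpow_div_mod[of j f p n] by simp
  then show ?thesis using assms(1) unfolding orbit_pts_def by auto
qed

lemma in_basin_if_return_map_tendsto: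
  assumes cont: "\<And>x. isCont f x" and per: "0 < n" "(f ^^ n) p = p"
    and lim: "(\<lambda>i. (f ^^ (n * i)) x) \<longlonglongrightarrow> p"
  shows "x \<in> basin f (orbit_pts f n p)"
proof -
  define Orb where "Orb = orbit_pts f n p"
  define \<Phi> where "\<Phi> y = (\<Sum>r<n. infdist ((f ^^ r) y) Orb)" for y
  have "isCont \<Phi> p"
    unfolding \<Phi>_def by (intro continuous_intros isCont_funpow cont)
  moreover have "\<Phi> p = 0"
    using funpow_periodic_in_orbit_pts[OF per]
    by (simp add: \<Phi>_def Orb_def in_closure_iff_infdist_zero)
  ultimately have "(\<lambda>i. \<Phi> ((f ^^ (n * i)) x)) \<longlonglongrightarrow> 0"
    using isCont_tendsto_compose[OF _ lim] by fastforce
  then have \<Phi>_lim: "(\<lambda>j. \<Phi> ((f ^^ (n * (j div n))) x)) \<longlonglongrightarrow> 0"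
    by (rule filterlim_compose[OF _ filterlim_at_top_div_const_nat[OF per(1)]])
  have "norm (infdist ((f ^^ j) x) Orb) \<le> \<Phi> ((f ^^ (n * (j div n))) x)" for j
  proof -
    have "infdist ((f ^^ j) x) Orb = infdist ((f ^^ (j mod n)) ((f ^^ (n * (j div n))) x)) Orb"
      using funpow_div_mod[of j f x n] by simp
    also have "\<dots> \<le> \<Phi> ((f ^^ (n * (j div n))) x)"
      unfolding \<Phi>_def using per(1) by (intro member_le_sum) (auto simp: infdist_nonneg)
    finally show ?thesis by (simp add: infdist_nonneg)
  qed
  then have "(\<lambda>j. infdist ((f ^^ j) x) Orb) \<longlonglongrightarrow> 0"
    by (intro Lim_null_comparison[OF always_eventually \<Phi>_lim]) simp
  then show ?thesis by (simp add: basin_def Orb_def)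
qed

lemma in_basin_if_funpow_in_basin:
  assumes "(f ^^ j) x \<in> basin f Orb"
  shows "x \<in> basin f Orb"
proof -
  have "(\<lambda>i. infdist ((f ^^ (i + j)) x) Orb) \<longlonglongrightarrow> 0"
    using assms by (simp add: basin_def funpow_add)
  then show ?thesis unfolding basin_def by (simp add: LIMSEQ_offset[where k = j])
qed

lemma connected_subset_immediate_basin:
  "connected S \<Longrightarrow> S \<subseteq> basin f Orb \<Longrightarrow> q \<in> S \<Longrightarrow> q \<in> Orb \<Longrightarrow> S \<subseteq> immediate_basin f Orb"
  unfolding immediate_basin_def using connected_component_maximal[of q S "basin f Orb"] by auto

section \<open>Residues in a window\<close>

definition window_rep :: "int \<Rightarrow> int \<Rightarrow> int \<Rightarrow> int" where
  "window_rep n t x = t - (t - x) mod n"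

lemma window_rep_bounds: "0 < n \<Longrightarrow> t - n < window_rep n t x \<and> window_rep n t x \<le> t"
  unfolding window_rep_def using pos_mod_bound[of n "t - x"] pos_mod_sign[of n "t - x"] by linarith

lemma window_rep_mod: "window_rep n t x mod n = x mod n"
proof -
  have "(t - (t - x) mod n) mod n = (t - (t - x)) mod n" by (simp only: mod_diff_right_eq)
  then show ?thesis by (simp add: window_rep_def)
qed

lemma window_rep_eqI:
  assumes "t - n < y" "y \<le> t" "y mod n = x mod n"
  shows "window_rep n t x = y"
proof -
  have "(t - x) mod n = (t - y) mod n" using assms(3) by (metis mod_diff_right_eq)
  also have "\<dots> = t - y" using assms(1,2) by (intro mod_pos_pos_trivial) auto
  finally show ?thesis by (simp add: window_rep_def)
qed

lemma window_rep_add: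
  assumes "0 < n" "0 \<le> k" "k \<le> n"
  shows "window_rep n t (x + k) =
    window_rep n t x + k - (if t < window_rep n t x + k then n else 0)"
proof (rule window_rep_eqI)
  show "t - n < window_rep n t x + k - (if t < window_rep n t x + k then n else 0)"
    and "window_rep n t x + k - (if t < window_rep n t x + k then n else 0) \<le> t"
    using window_rep_bounds[OF assms(1), of t x] assms(2,3) by auto
  show "(window_rep n t x + k - (if t < window_rep n t x + k then n else 0)) mod n = (x + k) mod n"
  proof -
    have "(window_rep n t x + k) mod n = (window_rep n t x mod n + k) mod n"
      by (simp only: mod_add_left_eq)
    also have "\<dots> = (x + k) mod n"
      by (simp only: window_rep_mod mod_add_left_eq)
    finally show ?thesis
      by (cases "t < window_rep n t x + k")
        (simp_all only: if_True if_False minus_mod_self2 diff_zero)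
  qed
qed

lemma inverse_mod_exists:
  fixes k n :: nat
  assumes "coprime k n" "0 < k" "1 < n"
  obtains m where "m < n" "(m * k) mod n = 1"
proof -
  obtain x y where "k * x = n * y + gcd k n" using bezout_nat assms(2) by blast
  then have "x * k = 1 + y * n" using assms(1) by (simp add: ac_simps)
  then have "(x * k) mod n = (1 + y * n) mod n" by (simp only:)
  also have "\<dots> = 1" using assms(3) by (simp only: mod_mult_self1) simp
  finally have "(x * k) mod n = 1" .
  then show ?thesis using that[of "x mod n"] assms(3) by (simp add: mod_mult_left_eq)
qed

section \<open>Shadowing the rotation by k/n\<close>

locale near_rotation =
  fixes k n m :: nat and g :: "real \<Rightarrow> real" and y_minus y_plus \<epsilon> :: real
    and F :: "real \<Rightarrow> real"
  assumes F_def: "F = (\<lambda>x. x + real k / real n - g x)"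
    and k_pos: "0 < k" and k_less_n: "k < n"
    and m_less_n: "m < n" and m_inverse: "(m * k) mod n = 1"
    and g_range: "\<And>x. 0 < g x \<and> g x < 1"
    and g_deriv: "\<And>x. (g has_real_derivative deriv g x) (at x)"
    and y_minus_neg: "y_minus < 0" and y_plus_pos: "0 < y_plus"
    and g'_outer: "\<And>x. x < y_minus \<or> y_plus < x \<Longrightarrow> 0 < deriv g x \<and> deriv g x < 1"
    and \<epsilon>_pos: "0 < \<epsilon>"
    and C1: "\<And>x. x < - 1 / (2 * real n) \<Longrightarrow> g x < \<epsilon>"
    and C2: "\<And>x. 1 / (2 * real n) < x \<Longrightarrow> 1 - \<epsilon> < g x"
    and C3a: "(real n - 1) * \<epsilon> < 1 - g y_plus"
    and C3b: "(real n - 1) * \<epsilon> < 1 / (2 * real n) - (1 - g y_plus + y_plus)"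
    and C4a: "(real n - 1) * \<epsilon> < g y_minus"
    and C4b: "(real n - 1) * \<epsilon> < 1 / (2 * real n) - (g y_minus - y_minus)"
begin

lemma n_pos: "0 < n"
  using k_pos k_less_n by linarith

lemma n_ge_2: "2 \<le> n"
  using k_pos k_less_n by linarith

lemma m_pos: "0 < m"
  using m_inverse by (cases m) auto

lemma inverse_n_pos: "0 < 1 / real n"
  using n_pos by simp

lemma half_n: "1 / real n = 2 * (1 / (2 * real n))"
  by simp

lemma drift_bound_nonneg: "0 \<le> (real n - 1) * \<epsilon>"
  using n_pos \<epsilon>_pos by simp

text \<open>
  The orbit of \<open>y_-\<close> stays just left of the lattice points \<open>label_minus i / n\<close>, and the orbit
  of \<open>y_+\<close> just right of \<open>label_plus i / n\<close> (see \<open>y_minus_orbit_offset\<close> and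
  \<open>y_plus_orbit_offset\<close>); the windows are chosen so that the labels follow the rotation
  \<open>l \<mapsto> l + k - n\<cdot>[l > 0]\<close>.
\<close>

definition label_minus :: "nat \<Rightarrow> int" where
  "label_minus i = window_rep (int n) (int k) (int i * int k)"

definition label_plus :: "nat \<Rightarrow> int" where
  "label_plus i = window_rep (int n) (int k - 1) (int i * int k)"

lemma mult_k_mod_inj:
  assumes "i < n" "j < n" "(i * k) mod n = (j * k) mod n"
  shows "i = j"
proof -
  have "i mod n = (i * ((k * m) mod n)) mod n" using m_inverse by (simp add: mult.commute)
  also have "\<dots> = ((i * k) mod n * m) mod n"
    by (metis mod_mult_left_eq mod_mult_right_eq mult.assoc)
  also have "\<dots> = ((j * k) mod n * m) mod n" using assms(3) by simp
  also have "\<dots> = (j * ((k * m) mod n)) mod n"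
    by (metis mod_mult_left_eq mod_mult_right_eq mult.assoc)
  also have "\<dots> = j mod n" using m_inverse by (simp add: mult.commute)
  finally show ?thesis using assms(1,2) by simp
qed

lemma int_mult_mod: "int i * int k mod int n = int ((i * k) mod n)"
  by (metis of_nat_mult zmod_int)

lemma window_rep_mult_k_inj:
  assumes "i < n" "j < n"
    and "window_rep (int n) t (int i * int k) = window_rep (int n) t (int j * int k)"
  shows "i = j"
proof -
  have "int i * int k mod int n = int j * int k mod int n"
    by (metis assms(3) window_rep_mod)
  then have "(i * k) mod n = (j * k) mod n" by (simp only: int_mult_mod of_nat_eq_iff)
  then show ?thesis using mult_k_mod_inj assms(1,2) by blast
qed

lemma label_minus_inj: "i < n \<Longrightarrow> j < n \<Longrightarrow> label_minus i = label_minus j \<Longrightarrow> i = j"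
  unfolding label_minus_def by (rule window_rep_mult_k_inj)

lemma label_plus_inj: "i < n \<Longrightarrow> j < n \<Longrightarrow> label_plus i = label_plus j \<Longrightarrow> i = j"
  unfolding label_plus_def by (rule window_rep_mult_k_inj)

lemma label_minus_0: "label_minus 0 = 0" and label_plus_0: "label_plus 0 = 0"
  and label_minus_n: "label_minus n = 0" and label_plus_n: "label_plus n = 0"
  using k_pos k_less_n by (auto simp: label_minus_def label_plus_def intro!: window_rep_eqI)

lemma label_minus_nonzero: "0 < i \<Longrightarrow> i < n \<Longrightarrow> label_minus i \<noteq> 0"
  using label_minus_inj[of i 0] label_minus_0 n_pos by auto

lemma label_plus_nonzero: "0 < i \<Longrightarrow> i < n \<Longrightarrow> label_plus i \<noteq> 0"
  using label_plus_inj[of i 0] label_plus_0 n_pos by auto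

lemma int_Suc_mult: "int (Suc i) * int k = int i * int k + int k"
  by (simp add: distrib_right)

lemma label_minus_Suc:
  "label_minus (Suc i) = label_minus i + int k - (if 0 < label_minus i then int n else 0)"
  using window_rep_add[of "int n" "int k" "int k" "int i * int k"] n_pos k_less_n
  unfolding label_minus_def int_Suc_mult by simp

lemma label_plus_Suc:
  "label_plus i \<noteq> 0 \<Longrightarrow>
    label_plus (Suc i) = label_plus i + int k - (if 0 < label_plus i then int n else 0)"
  using window_rep_add[of "int n" "int k" "int k - 1" "int i * int k"] n_pos k_less_n
  unfolding label_plus_def int_Suc_mult by auto

lemma label_minus_m: "label_minus m = 1"
  unfolding label_minus_def
proof (rule window_rep_eqI)
  show "1 mod int n = int m * int k mod int n"
    using m_inverse n_ge_2 by (simp only: int_mult_mod) simp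
qed (use k_pos k_less_n in auto)

lemma n_minus_m_mult_mod: "int (n - m) * int k mod int n = - 1 mod int n"
proof -
  have "int (n - m) * int k = - (int m * int k) + int k * int n"
    using m_less_n by (simp add: of_nat_diff algebra_simps)
  then have "int (n - m) * int k mod int n = (- (int m * int k) + int k * int n) mod int n"
    by (simp only:)
  also have "\<dots> = - (int m * int k) mod int n" by (rule mod_mult_self1)
  also have "\<dots> = - (int m * int k mod int n) mod int n" by (simp only: mod_minus_eq)
  finally show ?thesis using m_inverse by (simp only: int_mult_mod) simp
qed

lemma label_minus_bounds: "int k - int n < label_minus i \<and> label_minus i \<le> int k"
  unfolding label_minus_def
  using window_rep_bounds[of "int n" "int k" "int i * int k"] n_pos by simp

lemma label_plus_bounds: "int k - 1 - int n < label_plus i \<and> label_plus i \<le> int k - 1"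
  unfolding label_plus_def
  using window_rep_bounds[of "int n" "int k - 1" "int i * int k"] n_pos by simp

lemma label_plus_n_minus_m: "label_plus (n - m) = - 1"
  unfolding label_plus_def
  using k_pos k_less_n n_minus_m_mult_mod by (intro window_rep_eqI) auto

lemma label_plus_n_minus_m_add: "label_plus (n - m + i) = label_minus i - 1"
  unfolding label_plus_def
proof (rule window_rep_eqI)
  have "int (n - m + i) * int k mod int n =
      (int (n - m) * int k mod int n + int i * int k) mod int n"
    by (simp add: distrib_right mod_add_left_eq)
  also have "\<dots> = (int i * int k - 1) mod int n"
    by (simp add: n_minus_m_mult_mod mod_add_left_eq)
  also have "\<dots> = (label_minus i - 1) mod int n"
    by (metis label_minus_def mod_diff_left_eq window_rep_mod)
  finally show "(label_minus i - 1) mod int n = int (n - m + i) * int k mod int n" ..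
qed (use label_minus_bounds[of i] in auto)

lemma label_minus_m_add: "label_minus (m + i) = label_plus i + 1"
  unfolding label_minus_def
proof (rule window_rep_eqI)
  have "int (m + i) * int k mod int n = (int m * int k mod int n + int i * int k) mod int n"
    by (simp add: distrib_right mod_add_left_eq)
  also have "\<dots> = (int i * int k + 1) mod int n"
    using m_inverse by (simp add: int_mult_mod add.commute)
  also have "\<dots> = (label_plus i + 1) mod int n"
    by (metis label_plus_def mod_add_left_eq window_rep_mod)
  finally show "(label_plus i + 1) mod int n = int (m + i) * int k mod int n" ..
qed (use label_plus_bounds[of i] in auto)

lemma label_minus_ne_1: "0 < i \<Longrightarrow> i < m \<Longrightarrow> label_minus i \<noteq> 1"
  using label_minus_inj[of i m] label_minus_m m_less_n by auto

lemma label_plus_ne_minus_1: "0 < i \<Longrightarrow> i < n - m \<Longrightarrow> label_plus i \<noteq> - 1"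
  using label_plus_inj[of i "n - m"] label_plus_n_minus_m m_pos by auto

lemma F_has_derivative: "(F has_real_derivative 1 - deriv g x) (at x)"
  unfolding F_def using g_deriv by (auto intro!: derivative_eq_intros)

lemma F_isCont: "isCont F x"
  using F_has_derivative by (rule DERIV_isCont)

lemma mono_contractive_on_lap: "v \<le> y_minus \<or> y_plus \<le> u \<Longrightarrow> mono_contractive_on {u..v} F"
proof (rule mono_contractive_on_if_deriv[OF F_has_derivative])
  fix x assume "v \<le> y_minus \<or> y_plus \<le> u" "u < x" "x < v"
  then show "0 < 1 - deriv g x \<and> 1 - deriv g x < 1" using g'_outer[of x] by auto
qed

lemma shadow_step:
  fixes l :: int
  assumes "l \<noteq> 0" "\<bar>s\<bar> < 1 / (2 * real n)"
  shows "\<bar>F (l / n + s) - ((l + int k - (if 0 < l then int n else 0)) / n + s)\<bar> < \<epsilon>"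
proof -
  define x where "x = l / n + s"
  show ?thesis
  proof (cases "0 < l")
    case True
    then have "1 / real n \<le> l / n" using n_pos by (simp add: divide_right_mono)
    then have "1 / (2 * real n) < x" using assms(2) half_n unfolding x_def by linarith
    then have "1 - \<epsilon> < g x" by (rule C2)
    moreover have "F x = (l + int k - int n) / n + s + (1 - g x)"
      using n_pos by (simp add: F_def x_def field_simps)
    ultimately show ?thesis using True g_range[of x] unfolding x_def[symmetric] by simp
  next
    case False
    then have "real_of_int l \<le> - 1" using assms(1) by simp
    then have "l / n \<le> - 1 / real n" using n_pos by (intro divide_right_mono) auto
    then have "x < - 1 / (2 * real n)" using assms(2) half_n unfolding x_def by linarith
    then have "g x < \<epsilon>" by (rule C1)
    moreover have "F x = (l + int k) / n + s - g x"
      using n_pos by (simp add: F_def x_def field_simps)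
    ultimately show ?thesis using False g_range[of x] unfolding x_def[symmetric] by simp
  qed
qed

lemma shadow_orbit:
  fixes lab :: "nat \<Rightarrow> int"
  assumes lab: "\<And>i. i < j \<Longrightarrow>
      lab i \<noteq> 0 \<and> lab (Suc i) = lab i + int k - (if 0 < lab i then int n else 0)"
    and s: "\<bar>s\<bar> + real j * \<epsilon> < 1 / (2 * real n)"
  shows "i \<le> j \<Longrightarrow> \<bar>(F ^^ i) (lab 0 / n + s) - (lab i / n + s)\<bar> \<le> real i * \<epsilon>"
proof (induction i)
  case (Suc i)
  define d where "d = (F ^^ i) (lab 0 / n + s) - (lab i / n + s)"
  have d: "\<bar>d\<bar> \<le> real i * \<epsilon>" using Suc by (simp add: d_def)
  have "real i * \<epsilon> < real j * \<epsilon>" using Suc.prems \<epsilon>_pos by simp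
  then have "\<bar>s + d\<bar> < 1 / (2 * real n)" using s d by linarith
  then have "\<bar>F (lab i / n + (s + d)) - (lab (Suc i) / n + (s + d))\<bar> < \<epsilon>"
    using shadow_step[of "lab i" "s + d"] lab[of i] Suc.prems by simp
  moreover have "(F ^^ Suc i) (lab 0 / n + s) = F (lab i / n + (s + d))" by (simp add: d_def)
  ultimately show ?case using d by (simp add: algebra_simps)
qed simp

lemma label_minus_1: "label_minus 1 = int k"
  using label_minus_Suc[of 0] by (simp add: label_minus_0)

lemma label_plus_1: "label_plus 1 = int k - int n"
  unfolding label_plus_def using k_pos k_less_n by (intro window_rep_eqI) auto

lemma shadow_critical_orbit:
  fixes lab :: "nat \<Rightarrow> int"
  assumes first: "F y = lab 1 / n + s"
    and lab: "\<And>i. 0 < i \<Longrightarrow> i < n \<Longrightarrow>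
      lab i \<noteq> 0 \<and> lab (Suc i) = lab i + int k - (if 0 < lab i then int n else 0)"
    and s: "\<bar>s\<bar> + (real n - 1) * \<epsilon> < 1 / (2 * real n)"
    and i: "0 < i" "i \<le> n"
  shows "\<bar>(F ^^ i) y - (lab i / n + s)\<bar> \<le> (real n - 1) * \<epsilon>"
proof -
  have "\<bar>(F ^^ (i - 1)) (lab (Suc 0) / n + s) - (lab (Suc (i - 1)) / n + s)\<bar> \<le> real (i - 1) * \<epsilon>"
  proof (rule shadow_orbit[where lab = "\<lambda>i. lab (Suc i)" and j = "n - 1"])
    show "lab (Suc i') \<noteq> 0 \<and>
        lab (Suc (Suc i')) = lab (Suc i') + int k - (if 0 < lab (Suc i') then int n else 0)"
      if "i' < n - 1" for i'
      using lab[of "Suc i'"] that by simp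
    show "\<bar>s\<bar> + real (n - 1) * \<epsilon> < 1 / (2 * real n)"
      using s n_pos by (simp add: of_nat_diff)
  qed (use i in simp)
  moreover have "(F ^^ (i - 1)) (F y) = (F ^^ i) y"
    using i(1) by (metis Suc_diff_1 comp_apply funpow_Suc_right)
  moreover have "real (i - 1) * \<epsilon> \<le> (real n - 1) * \<epsilon>"
    using i \<epsilon>_pos by (simp add: of_nat_diff)
  ultimately show ?thesis using i(1) first by simp
qed

lemma y_minus_orbit_shadow:
  assumes "0 < i" "i \<le> n"
  shows "\<bar>(F ^^ i) y_minus - (label_minus i / n + (y_minus - g y_minus))\<bar> \<le> (real n - 1) * \<epsilon>"
proof (rule shadow_critical_orbit[where lab = label_minus and s = "y_minus - g y_minus",
      OF _ _ _ assms])
  show "F y_minus = label_minus 1 / n + (y_minus - g y_minus)"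
    unfolding label_minus_1 by (simp add: F_def)
  show "label_minus i \<noteq> 0 \<and>
      label_minus (Suc i) = label_minus i + int k - (if 0 < label_minus i then int n else 0)"
    if "0 < i" "i < n" for i
    using label_minus_nonzero[OF that] label_minus_Suc[of i] by simp
  show "\<bar>y_minus - g y_minus\<bar> + (real n - 1) * \<epsilon> < 1 / (2 * real n)"
    using C4b y_minus_neg g_range[of y_minus] by simp
qed

lemma y_plus_orbit_shadow:
  assumes "0 < i" "i \<le> n"
  shows "\<bar>(F ^^ i) y_plus - (label_plus i / n + (y_plus + 1 - g y_plus))\<bar> \<le> (real n - 1) * \<epsilon>"
proof (rule shadow_critical_orbit[where lab = label_plus and s = "y_plus + 1 - g y_plus",
      OF _ _ _ assms])
  show "F y_plus = label_plus 1 / n + (y_plus + 1 - g y_plus)"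
    unfolding label_plus_1 using n_pos by (simp add: F_def field_simps)
  show "label_plus i \<noteq> 0 \<and>
      label_plus (Suc i) = label_plus i + int k - (if 0 < label_plus i then int n else 0)"
    if "0 < i" "i < n" for i
    using label_plus_nonzero[OF that] label_plus_Suc[of i] by simp
  show "\<bar>y_plus + 1 - g y_plus\<bar> + (real n - 1) * \<epsilon> < 1 / (2 * real n)"
    using C3b y_plus_pos g_range[of y_plus] by simp
qed

lemma y_minus_orbit_offset:
  assumes "0 < i" "i \<le> n"
  shows "- 1 / (2 * real n) < (F ^^ i) y_minus - label_minus i / n \<and>
    (F ^^ i) y_minus - label_minus i / n < y_minus"
  using y_minus_orbit_shadow[OF assms] C4a C4b by (simp add: abs_le_iff)

lemma y_plus_orbit_offset:
  assumes "0 < i" "i \<le> n"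
  shows "y_plus < (F ^^ i) y_plus - label_plus i / n \<and>
    (F ^^ i) y_plus - label_plus i / n < 1 / (2 * real n)"
  using y_plus_orbit_shadow[OF assms] C3a C3b by (simp add: abs_le_iff)

lemma funpow_n_y_minus_less: "(F ^^ n) y_minus < y_minus"
  using y_minus_orbit_offset[of n] n_pos label_minus_n by simp

lemma y_plus_less_funpow_n_y_plus: "y_plus < (F ^^ n) y_plus"
  using y_plus_orbit_offset[of n] n_pos label_plus_n by simp

section \<open>The trapping intervals\<close>

definition a_minus :: real where "a_minus = (F ^^ (n - m)) y_plus"
definition b_plus :: real where "b_plus = (F ^^ m) y_minus"

lemma y_minus_gt: "- 1 / (2 * real n) < y_minus"
  using C4b drift_bound_nonneg g_range[of y_minus] by linarith

lemma y_plus_lt: "y_plus < 1 / (2 * real n)"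
  using C3b drift_bound_nonneg g_range[of y_plus] by linarith

lemma a_minus_bounds: "y_plus - 1 / real n < a_minus \<and> a_minus < - 1 / (2 * real n)"
proof -
  have "a_minus = - 1 / real n + ((F ^^ (n - m)) y_plus - label_plus (n - m) / n)"
    by (simp add: a_minus_def label_plus_n_minus_m)
  moreover have "y_plus < (F ^^ (n - m)) y_plus - label_plus (n - m) / n"
    and "(F ^^ (n - m)) y_plus - label_plus (n - m) / n < 1 / (2 * real n)"
    using y_plus_orbit_offset[of "n - m"] m_pos m_less_n by simp_all
  ultimately show ?thesis using half_n by linarith
qed

lemma b_plus_bounds: "1 / (2 * real n) < b_plus \<and> b_plus < y_minus + 1 / real n"
proof -
  have "b_plus = 1 / real n + ((F ^^ m) y_minus - label_minus m / n)"
    by (simp add: b_plus_def label_minus_m)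
  moreover have "- 1 / (2 * real n) < (F ^^ m) y_minus - label_minus m / n"
    and "(F ^^ m) y_minus - label_minus m / n < y_minus"
    using y_minus_orbit_offset[of m] m_pos m_less_n by simp_all
  ultimately show ?thesis using half_n by linarith
qed

lemma a_minus_less_y_minus: "a_minus < y_minus"
  using a_minus_bounds y_minus_gt by linarith

lemma y_plus_less_b_plus: "y_plus < b_plus"
  using b_plus_bounds y_plus_lt by linarith

definition away_from_turning :: "real \<Rightarrow> real \<Rightarrow> bool" where
  "away_from_turning u v \<longleftrightarrow> v \<le> y_minus - 1 / real n \<or> y_plus + 1 / real n \<le> u"

lemma away_from_turning_latticeI:
  fixes l :: int
  assumes "l \<noteq> 0" "l \<noteq> 1" "y_plus < s_plus" "s_minus < y_minus"
  shows "away_from_turning ((l - 1) / n + s_plus) (l / n + s_minus)"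
proof (cases "2 \<le> l")
  case True
  then have "1 / real n \<le> (l - 1) / n" using n_pos by (intro divide_right_mono) auto
  then show ?thesis using assms(3) by (simp add: away_from_turning_def)
next
  case False
  then have "real_of_int l \<le> - 1" using assms(1,2) by simp
  then have "l / n \<le> - 1 / real n" using n_pos by (intro divide_right_mono) auto
  then show ?thesis using assms(4) by (simp add: away_from_turning_def)
qed

lemma away_from_turningE:
  assumes "away_from_turning u v"
  obtains "v \<le> y_minus - 1 / real n" | "y_plus + 1 / real n \<le> u"
  using assms unfolding away_from_turning_def by blast

lemma away_from_turning_lap: "away_from_turning u v \<Longrightarrow> v \<le> y_minus \<or> y_plus \<le> u"
  by (elim away_from_turningE) (use inverse_n_pos in linarith)+

lemma away_from_turning_outside:
  "away_from_turning u v \<Longrightarrow> x \<in> {u..v} \<Longrightarrow> x < a_minus \<or> y_plus < x"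
  using a_minus_bounds inverse_n_pos y_minus_neg y_plus_pos by (elim away_from_turningE) auto

lemma left_orbit_away:
  assumes "0 < i" "i < m"
  shows "away_from_turning ((F ^^ i) a_minus) ((F ^^ i) y_minus)"
proof -
  define s_plus where "s_plus = (F ^^ (n - m + i)) y_plus - label_plus (n - m + i) / n"
  define s_minus where "s_minus = (F ^^ i) y_minus - label_minus i / n"
  have "(F ^^ i) a_minus = (F ^^ (n - m + i)) y_plus"
    by (simp add: a_minus_def funpow_add add.commute)
  then have "(F ^^ i) a_minus = (label_minus i - 1) / n + s_plus"
    by (simp add: s_plus_def label_plus_n_minus_m_add)
  moreover have "(F ^^ i) y_minus = label_minus i / n + s_minus" by (simp add: s_minus_def)
  moreover have "y_plus < s_plus" "s_minus < y_minus"
    using y_plus_orbit_offset[of "n - m + i"] y_minus_orbit_offset[of i] assms m_less_n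
    by (simp_all add: s_plus_def s_minus_def)
  moreover have "label_minus i \<noteq> 0" "label_minus i \<noteq> 1"
    using label_minus_nonzero[of i] label_minus_ne_1[of i] assms m_less_n by auto
  ultimately show ?thesis by (metis away_from_turning_latticeI)
qed

lemma right_orbit_away:
  assumes "0 < i" "i < n - m"
  shows "away_from_turning ((F ^^ i) y_plus) ((F ^^ i) b_plus)"
proof -
  define s_plus where "s_plus = (F ^^ i) y_plus - label_plus i / n"
  define s_minus where "s_minus = (F ^^ (m + i)) y_minus - label_minus (m + i) / n"
  have "(F ^^ i) y_plus = ((label_plus i + 1) - 1) / n + s_plus" by (simp add: s_plus_def)
  moreover have "(F ^^ i) b_plus = (F ^^ (m + i)) y_minus"
    by (simp add: b_plus_def funpow_add add.commute)
  then have "(F ^^ i) b_plus = (label_plus i + 1) / n + s_minus"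
    by (simp add: s_minus_def label_minus_m_add)
  moreover have "y_plus < s_plus" "s_minus < y_minus"
    using y_plus_orbit_offset[of i] y_minus_orbit_offset[of "m + i"] assms
    by (simp_all add: s_plus_def s_minus_def)
  moreover have "label_plus i + 1 \<noteq> 0" "label_plus i + 1 \<noteq> 1"
    using label_plus_nonzero[of i] label_plus_ne_minus_1[of i] assms by auto
  ultimately show ?thesis by (metis away_from_turning_latticeI)
qed

lemma left_orbit_lap: "i < m \<Longrightarrow> (F ^^ i) y_minus \<le> y_minus \<or> y_plus \<le> (F ^^ i) a_minus"
  using left_orbit_away[of i] away_from_turning_lap by (cases "i = 0") auto

lemma right_orbit_lap: "i < n - m \<Longrightarrow> (F ^^ i) b_plus \<le> y_minus \<or> y_plus \<le> (F ^^ i) y_plus"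
  using right_orbit_away[of i] away_from_turning_lap by (cases "i = 0") auto

lemma funpow_mono_contractive:
  assumes "0 < j" and lap: "\<And>i. i < j \<Longrightarrow> (F ^^ i) b \<le> y_minus \<or> y_plus \<le> (F ^^ i) a"
  shows "mono_contractive_on {a..b} (F ^^ j)"
  using assms(1) lap
proof (induction j rule: nat_induct_non_zero)
  case 1
  then show ?case using mono_contractive_on_lap[of b a] by simp
next
  case (Suc j)
  then have contr: "mono_contractive_on {a..b} (F ^^ j)" by simp
  have "mono_contractive_on {(F ^^ j) a..(F ^^ j) b} F"
    using Suc.prems[of j] by (intro mono_contractive_on_lap) simp
  then have "mono_contractive_on {a..b} (F \<circ> F ^^ j)"
    by (rule mono_contractive_on_comp[OF contr mono_contractive_on_image_interval[OF contr]])
  then show ?case by (simp only: funpow.simps(2))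
qed

lemma left_to_right_interval:
  shows "mono_contractive_on {a_minus..y_minus} (F ^^ m)"
    and "(F ^^ m) ` {a_minus..y_minus} \<subseteq> {(F ^^ n) y_plus..b_plus}"
proof -
  show contr: "mono_contractive_on {a_minus..y_minus} (F ^^ m)"
    by (rule funpow_mono_contractive[OF m_pos left_orbit_lap])
  have "(F ^^ m) a_minus = (F ^^ (m + (n - m))) y_plus" by (simp add: a_minus_def funpow_add)
  then have "(F ^^ m) a_minus = (F ^^ n) y_plus" using m_less_n by simp
  then show "(F ^^ m) ` {a_minus..y_minus} \<subseteq> {(F ^^ n) y_plus..b_plus}"
    using mono_contractive_on_image_interval[OF contr] by (simp add: b_plus_def)
qed

lemma right_to_left_interval:
  shows "mono_contractive_on {y_plus..b_plus} (F ^^ (n - m))"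
    and "(F ^^ (n - m)) ` {y_plus..b_plus} \<subseteq> {a_minus..(F ^^ n) y_minus}"
proof -
  show contr: "mono_contractive_on {y_plus..b_plus} (F ^^ (n - m))"
    by (rule funpow_mono_contractive[OF _ right_orbit_lap]) (use m_less_n in simp_all)
  have "(F ^^ (n - m)) b_plus = (F ^^ (n - m + m)) y_minus" by (simp add: b_plus_def funpow_add)
  then have "(F ^^ (n - m)) b_plus = (F ^^ n) y_minus" using m_less_n by simp
  then show "(F ^^ (n - m)) ` {y_plus..b_plus} \<subseteq> {a_minus..(F ^^ n) y_minus}"
    using mono_contractive_on_image_interval[OF contr] by (simp add: a_minus_def)
qed

lemma funpow_n_split: "F ^^ n = F ^^ (n - m) \<circ> F ^^ m"
  using m_less_n funpow_add[of "n - m" m F] by simp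

lemma funpow_n_self_contraction:
  shows "mono_contractive_on {a_minus..y_minus} (F ^^ n)"
    and "(F ^^ n) ` {a_minus..y_minus} \<subseteq> {a_minus..y_minus}"
proof -
  have sub: "(F ^^ m) ` {a_minus..y_minus} \<subseteq> {y_plus..b_plus}"
    using left_to_right_interval(2) y_plus_less_funpow_n_y_plus by (auto simp: subset_iff)
  show "mono_contractive_on {a_minus..y_minus} (F ^^ n)"
    unfolding funpow_n_split
    by (rule mono_contractive_on_comp[OF left_to_right_interval(1) sub right_to_left_interval(1)])
  have "(F ^^ n) ` {a_minus..y_minus} = (F ^^ (n - m)) ` ((F ^^ m) ` {a_minus..y_minus})"
    by (simp add: funpow_n_split image_comp)
  also have "\<dots> \<subseteq> (F ^^ (n - m)) ` {y_plus..b_plus}" using sub by (rule image_mono)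
  also have "\<dots> \<subseteq> {a_minus..(F ^^ n) y_minus}" by (rule right_to_left_interval(2))
  also have "\<dots> \<subseteq> {a_minus..y_minus}" using funpow_n_y_minus_less by auto
  finally show "(F ^^ n) ` {a_minus..y_minus} \<subseteq> {a_minus..y_minus}" .
qed

section \<open>The attracting orbit\<close>

context
  fixes p :: real
  assumes p_in: "p \<in> {a_minus..y_minus}" and p_fixed: "(F ^^ n) p = p"
begin

lemma p_less_y_minus: "p < y_minus"
  using p_in p_fixed funpow_n_y_minus_less by (cases "p = y_minus") auto

lemma left_orbit_interval: "i \<le> m \<Longrightarrow> (F ^^ i) p \<in> {(F ^^ i) a_minus..(F ^^ i) y_minus}"
proof (cases "i = 0")
  case False
  assume "i \<le> m"
  then have "mono_contractive_on {a_minus..y_minus} (F ^^ i)"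
    using False left_orbit_lap by (intro funpow_mono_contractive) auto
  then show ?thesis by (rule subsetD[OF mono_contractive_on_image_interval imageI[OF p_in]])
qed (use p_in in simp)

lemma p_image_right_interval: "y_plus < (F ^^ m) p \<and> (F ^^ m) p \<le> b_plus"
proof -
  have "(F ^^ m) p \<in> {(F ^^ n) y_plus..b_plus}"
    by (rule subsetD[OF left_to_right_interval(2) imageI[OF p_in]])
  then show ?thesis using y_plus_less_funpow_n_y_plus by simp
qed

lemma right_orbit_interval:
  "i \<le> n - m \<Longrightarrow> (F ^^ (m + i)) p \<in> {(F ^^ i) y_plus..(F ^^ i) b_plus}"
proof -
  assume i: "i \<le> n - m"
  have q: "(F ^^ m) p \<in> {y_plus..b_plus}"
    using p_image_right_interval by simp
  show ?thesis
  proof (cases "i = 0")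
    case False
    then have "mono_contractive_on {y_plus..b_plus} (F ^^ i)"
      using i right_orbit_lap by (intro funpow_mono_contractive) auto
    then have "(F ^^ i) ((F ^^ m) p) \<in> {(F ^^ i) y_plus..(F ^^ i) b_plus}"
      by (rule subsetD[OF mono_contractive_on_image_interval imageI[OF q]])
    then show ?thesis by (simp add: funpow_add add.commute)
  qed (use q in simp)
qed

lemma orbit_outside_left_interval:
  assumes "0 < i" "i < n"
  shows "(F ^^ i) p < a_minus \<or> y_plus < (F ^^ i) p"
proof -
  consider "i < m" | "i = m" | "m < i" by linarith
  then show ?thesis
  proof cases
    case 1
    then show ?thesis
      using left_orbit_interval[of i] left_orbit_away[of i] assms away_from_turning_outside by auto
  next
    case 2
    then show ?thesis using p_image_right_interval by simp
  next
    case 3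
    define t where "t = i - m"
    have t: "i = m + t" "0 < t" "t < n - m" using 3 assms by (auto simp: t_def)
    then show ?thesis
      using right_orbit_interval[of t] right_orbit_away[of t] away_from_turning_outside by auto
  qed
qed

lemma orbit_in_outer_laps: "i < n \<Longrightarrow> (F ^^ i) p < y_minus \<or> y_plus < (F ^^ i) p"
  using orbit_outside_left_interval[of i] p_less_y_minus a_minus_less_y_minus
  by (cases "i = 0") auto

lemma p_periodic: "periodic_pt F n p"
  unfolding periodic_pt_def
proof (intro conjI allI impI n_pos p_fixed)
  fix j assume "0 < j \<and> j < n"
  then show "(F ^^ j) p \<noteq> p"
    using orbit_outside_left_interval[of j] p_in p_less_y_minus y_minus_neg y_plus_pos by auto
qed

lemma p_attracting: "attracting_periodic_pt F n p"
proof -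
  define multiplier where "multiplier = (\<Prod>i<n. 1 - deriv g ((F ^^ i) p))"
  have deriv: "((F ^^ n) has_real_derivative multiplier) (at p)"
    unfolding multiplier_def by (rule funpow_has_real_derivative[OF F_has_derivative])
  have factor_pos: "0 < 1 - deriv g ((F ^^ i) p)" and factor_less_1: "1 - deriv g ((F ^^ i) p) < 1"
    if "i < n" for i
    using g'_outer orbit_in_outer_laps[OF that] by auto
  have "0 < multiplier" unfolding multiplier_def using factor_pos by (intro prod_pos) auto
  moreover have "multiplier < (\<Prod>i<n. 1)"
    unfolding multiplier_def using factor_pos factor_less_1 factor_less_1[of 0] n_pos
    by (intro prod_mono_strict[of 0]) (auto intro: less_imp_le)
  ultimately have "\<bar>multiplier\<bar> < 1" by simp
  moreover have "(F ^^ n) differentiable (at p)"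
    using deriv real_differentiable_def by blast
  ultimately show ?thesis
    using p_periodic DERIV_imp_deriv[OF deriv] by (simp add: attracting_periodic_pt_def)
qed

lemma left_interval_in_basin: "{a_minus..y_minus} \<subseteq> basin F (orbit_pts F n p)"
proof
  fix x assume x: "x \<in> {a_minus..y_minus}"
  have "(\<lambda>i. ((F ^^ n) ^^ i) x) \<longlonglongrightarrow> p"
    by (rule mono_contractive_iterates_tendsto_fixpoint[OF funpow_n_self_contraction p_in p_fixed x])
  then show "x \<in> basin F (orbit_pts F n p)"
    by (intro in_basin_if_return_map_tendsto[OF F_isCont n_pos p_fixed]) (simp add: funpow_mult)
qed

lemma right_interval_in_basin: "{y_plus..b_plus} \<subseteq> basin F (orbit_pts F n p)"
proof
  fix x assume "x \<in> {y_plus..b_plus}"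
  then have "(F ^^ (n - m)) x \<in> {a_minus..(F ^^ n) y_minus}"
    by (rule subsetD[OF right_to_left_interval(2) imageI])
  then have "(F ^^ (n - m)) x \<in> {a_minus..y_minus}" using funpow_n_y_minus_less by simp
  then show "x \<in> basin F (orbit_pts F n p)"
    by (rule in_basin_if_funpow_in_basin[OF subsetD[OF left_interval_in_basin]])
qed

lemma y_minus_in_immediate_basin: "y_minus \<in> immediate_basin F (orbit_pts F n p)"
proof -
  have "p \<in> orbit_pts F n p" using funpow_periodic_in_orbit_pts[OF n_pos p_fixed, of 0] by simp
  then have "{a_minus..y_minus} \<subseteq> immediate_basin F (orbit_pts F n p)"
    using left_interval_in_basin p_in by (intro connected_subset_immediate_basin) auto
  then show ?thesis using a_minus_less_y_minus by auto
qed

lemma y_plus_in_immediate_basin: "y_plus \<in> immediate_basin F (orbit_pts F n p)"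
proof -
  have "(F ^^ m) p \<in> {y_plus..b_plus}" using right_orbit_interval[of 0] by simp
  moreover have "(F ^^ m) p \<in> orbit_pts F n p"
    by (rule funpow_periodic_in_orbit_pts[OF n_pos p_fixed])
  ultimately have "{y_plus..b_plus} \<subseteq> immediate_basin F (orbit_pts F n p)"
    using right_interval_in_basin by (intro connected_subset_immediate_basin) auto
  then show ?thesis using y_plus_less_b_plus by auto
qed

end

theorem attracting_orbit_with_critical_points_in_immediate_basin:
  "\<exists>p. attracting_periodic_pt F n p \<and> (\<forall>q\<in>orbit_pts F n p. q < y_minus \<or> y_plus < q) \<and>
     y_minus \<in> immediate_basin F (orbit_pts F n p) \<and>
     y_plus \<in> immediate_basin F (orbit_pts F n p)"
proof -
  obtain p where p: "p \<in> {a_minus..y_minus}" "(F ^^ n) p = p"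
    using mono_contractive_self_map_fixpoint[OF funpow_n_self_contraction] a_minus_less_y_minus
    by auto
  have "\<forall>q\<in>orbit_pts F n p. q < y_minus \<or> y_plus < q"
    using orbit_in_outer_laps[OF p] by (auto simp: orbit_pts_def)
  then show ?thesis
    using p_attracting[OF p] y_minus_in_immediate_basin[OF p] y_plus_in_immediate_basin[OF p]
    by blast
qed

end

theorem lemma3p1:
  fixes k n :: nat and g :: "real \<Rightarrow> real" and y_minus y_plus \<epsilon> :: real
  defines "b \<equiv> real k / real n"
  defines "F \<equiv> (\<lambda>x. x + b - g x)"
  assumes kn: "0 < k" "k < n" "coprime k n"
    and g_range: "\<forall>x. 0 < g x \<and> g x < 1"
    and g_C3: "C3 g"
    and SF_neg: "\<forall>x. deriv F x \<noteq> 0 \<longrightarrow> schwarzian F x < 0"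
    and A_pts: "b - 1 < y_minus" "y_minus < 0" "0 < y_plus" "y_plus < b"
    and A_out: "\<forall>x. x < y_minus \<or> y_plus < x \<longrightarrow> 0 < deriv g x \<and> deriv g x < 1"
    and A_crit: "deriv g y_minus = 1" "deriv g y_plus = 1"
    and A_in: "\<forall>x. y_minus < x \<and> x < y_plus \<longrightarrow> deriv g x > 1"
    and B: "g (b - 1) < b" "b < g b"
    and C0: "\<epsilon> > 0"
    and C1: "\<forall>x. x < - 1 / (2 * real n) \<longrightarrow> g x < \<epsilon>"
    and C2: "\<forall>x. x > 1 / (2 * real n) \<longrightarrow> g x > 1 - \<epsilon>"
    and C3a: "(real n - 1) * \<epsilon> < 1 - g y_plus"
    and C3b: "(real n - 1) * \<epsilon> < 1 / (2 * real n) - (1 - g y_plus + y_plus)"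
    and C4a: "(real n - 1) * \<epsilon> < g y_minus"
    and C4b: "(real n - 1) * \<epsilon> < 1 / (2 * real n) - (g y_minus - y_minus)"
  shows "\<exists>p. attracting_periodic_pt F n p \<and>
             (\<forall>q\<in>orbit_pts F n p. q < y_minus \<or> y_plus < q) \<and>
             y_minus \<in> immediate_basin F (orbit_pts F n p) \<and>
             y_plus \<in> immediate_basin F (orbit_pts F n p)"
proof -
  obtain m where m: "m < n" "(m * k) mod n = 1"
    using inverse_mod_exists[OF kn(3,1)] kn(1,2) by auto
  interpret near_rotation k n m g y_minus y_plus \<epsilon> F
  proof
    show "F = (\<lambda>x. x + real k / real n - g x)" by (simp add: F_def b_def)
    show "(g has_real_derivative deriv g x) (at x)" for x using g_C3 by (simp add: C3_def)
  qed (use kn m g_range A_pts A_out C0 C1 C2 C3a C3b C4a C4b in auto)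
  show ?thesis by (rule attracting_orbit_with_critical_points_in_immediate_basin)
qed

end
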